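(* There are infinitely many positive integers $n$ with $V(n+1)>V(n)$, and there are infinitely many positive integers $n$ with $V(n+1)<V(n)$.
   Context: For a positive integer $n$, an integer $a$ is called regular modulo $n$ if there exists an integer $x$ with $a^2x\equiv a \pmod n$. Let $V(n)$ denote the number of integers $a$ with $1\le a\le n$ that are regular modulo $n$. (Known fact: $V$ is multiplicative, $V(1)=1$, and $V(p^{\alpha})=p^{\alpha}-p^{\alpha-1}+1$ for a prime $p$ and $\alpha\ge1$.) *)

theory Defs
  imports "HOL-Number_Theory.Number_Theory"
begin

definition regular_mod :: "int \<Rightarrow> nat \<Rightarrow> bool" where
  "regular_mod a n \<longleftrightarrow> (\<exists>x::int. [a^2 * x = a] (mod int n))"

definition V :: "nat \<Rightarrow> nat" where
  "V n = card {a::int. 1 \<le> a \<and> a \<le> int n \<and> regular_mod a n}"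

end

theory Submission
  imports Defs "HOL-Computational_Algebra.Squarefree"
begin

text \<open>
  Modulo a squarefree \<open>n\<close> every residue is regular, so \<open>V n = n\<close>, while \<open>V n \<le> n\<close> always.
  Hence \<open>V p > V (p - 1)\<close> for every prime \<open>p\<close>. If \<open>4\<close> divides \<open>n\<close>, the residues \<open>2\<close> and \<open>6\<close> are
  not regular, so \<open>V n < n\<close>; thus \<open>V (n + 1) < V n\<close> whenever \<open>n\<close> is squarefree and
  \<open>n \<equiv> 3 (mod 4)\<close>, and for each large prime \<open>p\<close> one of \<open>p\<close>, \<open>3 p\<close> is such an \<open>n\<close>.
\<close>

lemma squarefree_imp_regular_mod:
  fixes a n :: int
  assumes sq: "squarefree n" and nz: "n \<noteq> 0"
  shows "\<exists>x. [a^2 * x = a] (mod n)"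
proof -
  define g where "g = gcd a n"
  have "g \<noteq> 0" using nz by (simp add: g_def)
  obtain m where nm: "n = g * m" unfolding g_def by (meson gcd_dvd2 dvdE)
  obtain b where ab: "a = g * b" unfolding g_def by (meson gcd_dvd1 dvdE)
  have "coprime g m"
  proof (rule coprimeI)
    fix d assume "d dvd g" "d dvd m"
    hence "d^2 dvd g * m" by (simp add: power2_eq_square mult_dvd_mono)
    thus "is_unit d" using squarefreeD[OF sq] nm by simp
  qed
  moreover have "coprime (a div g) (n div g)"
    using \<open>g \<noteq> 0\<close> unfolding g_def by (simp add: div_gcd_coprime)
  hence "coprime b m" using ab nm \<open>g \<noteq> 0\<close> by simp
  ultimately have "coprime a m" using ab by simp
  then obtain x where "[a * x = 1] (mod m)" using cong_solve_coprime_int by blast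
  hence "m dvd a * x - 1" by (simp add: cong_iff_dvd_diff)
  hence "g * m dvd g * (b * (a * x - 1))" by (simp add: mult_dvd_mono)
  hence "n dvd a^2 * x - a" using nm ab by (simp add: power2_eq_square algebra_simps)
  hence "[a^2 * x = a] (mod n)" by (simp add: cong_iff_dvd_diff)
  thus ?thesis ..
qed

lemma not_regular_mod_if_square_dvd:
  fixes a p :: int
  assumes "p^2 dvd int n" "p dvd a" "\<not> p^2 dvd a"
  shows "\<not> regular_mod a n"
proof
  assume "regular_mod a n"
  then obtain x where "[a^2 * x = a] (mod int n)" unfolding regular_mod_def by blast
  hence "[a^2 * x = a] (mod p^2)" using assms(1) cong_dvd_modulus by blast
  moreover have "p^2 dvd a^2 * x" using assms(2) by (simp add: dvd_mult2)
  ultimately have "p^2 dvd a" using cong_dvd_iff by blast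
  with assms(3) show False ..
qed

lemma V_le_self: "V n \<le> n"
proof -
  have "V n \<le> card {1..int n}" unfolding V_def by (rule card_mono) auto
  thus ?thesis by simp
qed

lemma V_eq_self_if_squarefree:
  assumes "squarefree (int n)" "n > 0"
  shows "V n = n"
proof -
  have "{a::int. 1 \<le> a \<and> a \<le> int n \<and> regular_mod a n} = {1..int n}"
    using squarefree_imp_regular_mod[OF assms(1)] assms(2) by (auto simp: regular_mod_def)
  thus ?thesis unfolding V_def by simp
qed

lemma V_add_2_le_if_4_dvd:
  assumes "4 dvd n" "6 \<le> n"
  shows "V n + 2 \<le> n"
proof -
  have "\<not> regular_mod a n" if "a = 2 \<or> a = 6" for a :: int
    using that assms(1) by (intro not_regular_mod_if_square_dvd[of 2]) auto
  hence "{a::int. 1 \<le> a \<and> a \<le> int n \<and> regular_mod a n} \<subseteq> {1..int n} - {2, 6}"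
    by force
  hence "V n \<le> card ({1..int n} - {2, 6})" unfolding V_def by (intro card_mono) auto
  also have "\<dots> = n - 2" using assms(2) by (simp add: card_Diff_subset)
  finally show ?thesis using assms(2) by simp
qed

lemma V_pred_lt_if_prime:
  assumes "prime p"
  shows "V (p - 1) < V p"
proof -
  have "V p = p"
    using assms by (intro V_eq_self_if_squarefree) (auto simp: squarefree_prime prime_gt_0_nat)
  with V_le_self[of "p - 1"] prime_gt_0_nat[OF assms] show ?thesis by simp
qed

lemma V_Suc_lt_if_squarefree:
  assumes "squarefree (int n)" "n mod 4 = 3" "n > 3"
  shows "V (n + 1) < V n"
proof -
  have "V n = n" using assms(1,3) by (intro V_eq_self_if_squarefree) auto
  moreover have "V (n + 1) + 2 \<le> n + 1" using assms(2,3) by (intro V_add_2_le_if_4_dvd) presburger+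
  ultimately show ?thesis by simp
qed

lemma unbounded_squarefree_3_mod_4: "\<exists>n > M. squarefree (int n) \<and> n mod 4 = 3"
proof -
  obtain p where p: "prime p" "p > M + 3" using bigger_prime by blast
  have "odd p" using p by (intro prime_odd_nat) auto
  have sp: "squarefree (int p)" using p by (simp add: squarefree_prime)
  show ?thesis
  proof (cases "p mod 4 = 3")
    case True
    with sp p show ?thesis by (intro exI[of _ p]) auto
  next
    case False
    have "coprime 3 p" using p by (intro primes_coprime) auto
    hence "coprime (3::int) (int p)" by (metis coprime_int_iff of_nat_numeral)
    hence "squarefree (int (3 * p))"
      using sp by (simp add: squarefree_mult_coprime squarefree_prime)
    moreover have "3 * p mod 4 = 3" using False \<open>odd p\<close> by presburger
    ultimately show ?thesis using p by (intro exI[of _ "3 * p"]) auto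
  qed
qed

theorem proposition1:
  shows "infinite {n::nat. 0 < n \<and> V (n + 1) > V n} \<and> infinite {n::nat. 0 < n \<and> V (n + 1) < V n}"
proof
  show "infinite {n::nat. 0 < n \<and> V (n + 1) > V n}"
    unfolding infinite_nat_iff_unbounded
  proof
    fix M :: nat
    obtain p where "prime p" "p > M + 2" using bigger_prime by blast
    moreover have "p - 1 + 1 = p" using \<open>p > M + 2\<close> by simp
    ultimately show "\<exists>n>M. n \<in> {n. 0 < n \<and> V n < V (n + 1)}"
      using V_pred_lt_if_prime[of p] by (intro exI[of _ "p - 1"]) auto
  qed
  show "infinite {n::nat. 0 < n \<and> V (n + 1) < V n}"
    unfolding infinite_nat_iff_unbounded
  proof
    fix M :: nat
    obtain n where "n > M + 3" "squarefree (int n)" "n mod 4 = 3"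
      using unbounded_squarefree_3_mod_4 by blast
    thus "\<exists>n>M. n \<in> {n. 0 < n \<and> V (n + 1) < V n}"
      using V_Suc_lt_if_squarefree by (intro exI[of _ n]) auto
  qed
qed

end
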